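(* Let $n\ge2$ be an integer, $j$ a positive integer, $\alpha=1-\frac1n$, $\gamma_n=\frac12+\frac1n$, $\beta\le 0$ real with $Q\equiv\alpha-\beta-1\ge1$. For $z>0$ set $y=-jz^n$, $F(t)=yt+Q\log\frac{t}{t+1}$, $G(u)=-u^2+2(-y)^{1/2}u+(2Q+\gamma_n)\log u$, $t_0(z)=\frac{-1+\sqrt{1+4Q/(-y)}}{2}$, $u_0(z)=\frac{(-y)^{1/2}}{2}(1+\sqrt{1+\frac{4Q+2\gamma_n}{-y}})$, and $$\widehat F(z)=-\frac{jz^n}{2}+F(t_0(z)),\qquad \widehat G(z)=-\frac{jz^n}{2}+G(u_0(z)),$$ where $F$ and $G$ are evaluated with $y=-jz^n$. Then for every $\eta\ge0$, on the region $z\ge\eta^{2/n}$ the function $\widehat F(z)+\eta z^{n/2}$ is decreasing and the function $\widehat G(z)-\eta z^{n/2}$ is increasing. *)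

theory Defs
  imports Complex_Main
begin

definition alpha_n :: "nat \<Rightarrow> real" where
  "alpha_n n = 1 - 1 / real n"

definition gamma_n :: "nat \<Rightarrow> real" where
  "gamma_n n = 1/2 + 1 / real n"

definition QQ :: "nat \<Rightarrow> real \<Rightarrow> real" where
  "QQ n \<beta> = alpha_n n - \<beta> - 1"

definition yy :: "nat \<Rightarrow> nat \<Rightarrow> real \<Rightarrow> real" where
  "yy n j z = - real j * z ^ n"

definition FF :: "nat \<Rightarrow> nat \<Rightarrow> real \<Rightarrow> real \<Rightarrow> real \<Rightarrow> real" where
  "FF n j \<beta> z t = yy n j z * t + QQ n \<beta> * ln (t / (t + 1))"

definition GG :: "nat \<Rightarrow> nat \<Rightarrow> real \<Rightarrow> real \<Rightarrow> real \<Rightarrow> real" where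
  "GG n j \<beta> z u = - (u ^ 2) + 2 * sqrt (- yy n j z) * u + (2 * QQ n \<beta> + gamma_n n) * ln u"

definition t0 :: "nat \<Rightarrow> nat \<Rightarrow> real \<Rightarrow> real \<Rightarrow> real" where
  "t0 n j \<beta> z = (-1 + sqrt (1 + 4 * QQ n \<beta> / (- yy n j z))) / 2"

definition u0 :: "nat \<Rightarrow> nat \<Rightarrow> real \<Rightarrow> real \<Rightarrow> real" where
  "u0 n j \<beta> z = sqrt (- yy n j z) / 2 *
     (1 + sqrt (1 + (4 * QQ n \<beta> + 2 * gamma_n n) / (- yy n j z)))"

definition Fhat :: "nat \<Rightarrow> nat \<Rightarrow> real \<Rightarrow> real \<Rightarrow> real" where
  "Fhat n j \<beta> z = - real j * z ^ n / 2 + FF n j \<beta> z (t0 n j \<beta> z)"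

definition Ghat :: "nat \<Rightarrow> nat \<Rightarrow> real \<Rightarrow> real \<Rightarrow> real" where
  "Ghat n j \<beta> z = - real j * z ^ n / 2 + GG n j \<beta> z (u0 n j \<beta> z)"

end

theory Submission
  imports Defs
begin

text \<open>Substitute w = z powr (n/2): then j z^n = J w^2 with J = j, and the region
  z \<ge> \<eta> powr (2/n) becomes w \<ge> \<eta>. The inner arguments t0 and u0 are critical points of
  t \<mapsto> F(t) and u \<mapsto> G(u), so by the envelope principle only the explicit dependence on w
  survives in the derivative: d/dw Fhat = -J w - 2 J w t0 \<le> -J w, and
  d/dw Ghat = -J w + 2 sqrt J u0 \<ge> J w because u0 \<ge> sqrt J w. Both dominate the slope \<eta> of
  the correction term as soon as J w \<ge> \<eta>.\<close>

definition F_crit :: "real \<Rightarrow> real \<Rightarrow> real \<Rightarrow> real" where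
  "F_crit J Q w = (-1 + sqrt (1 + 4 * Q / (J * w^2))) / 2"

definition F_envelope :: "real \<Rightarrow> real \<Rightarrow> real \<Rightarrow> real" where
  "F_envelope J Q w =
     - J * w^2 / 2 - J * w^2 * F_crit J Q w + Q * (ln (F_crit J Q w) - ln (F_crit J Q w + 1))"

definition G_crit :: "real \<Rightarrow> real \<Rightarrow> real \<Rightarrow> real" where
  "G_crit J c w = (sqrt J * w + sqrt (J * w^2 + 2 * c)) / 2"

definition G_envelope :: "real \<Rightarrow> real \<Rightarrow> real \<Rightarrow> real" where
  "G_envelope J c w =
     - J * w^2 / 2 - (G_crit J c w)^2 + 2 * sqrt J * w * G_crit J c w + c * ln (G_crit J c w)"

lemma F_crit_pos:
  assumes "J > 0" "Q > 0" "w \<noteq> 0"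
  shows "F_crit J Q w > 0"
proof -
  have "1 < 1 + 4 * Q / (J * w^2)"
    using assms by simp
  then show ?thesis
    unfolding F_crit_def by (simp add: real_less_rsqrt)
qed

lemma F_crit_equation:
  assumes "J > 0" "Q > 0" "w \<noteq> 0"
  shows "F_crit J Q w * (F_crit J Q w + 1) = Q / (J * w^2)"
proof -
  define r where "r = sqrt (1 + 4 * Q / (J * w^2))"
  have t: "F_crit J Q w = (r - 1) / 2"
    unfolding F_crit_def r_def by simp
  have "F_crit J Q w * (F_crit J Q w + 1) = (r^2 - 1) / 4"
    unfolding t by (simp add: field_simps power2_eq_square)
  also have "r^2 = 1 + 4 * Q / (J * w^2)"
    unfolding r_def using assms by simp
  finally show ?thesis
    by simp
qed

lemma F_crit_differentiable:
  assumes "J > 0" "Q > 0" "w \<noteq> 0"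
  shows "F_crit J Q differentiable (at w)"
proof -
  have "\<exists>r'. ((\<lambda>w. 1 + 4 * Q / (J * w^2)) has_real_derivative r') (at w)"
    using assms by (intro exI) (auto intro!: derivative_eq_intros)
  then obtain r' where r': "((\<lambda>w. 1 + 4 * Q / (J * w^2)) has_real_derivative r') (at w)" ..
  have "0 < 1 + 4 * Q / (J * w^2)"
    using assms by (simp add: add_pos_nonneg)
  from this r' have sqrt': "((\<lambda>w. sqrt (1 + 4 * Q / (J * w^2))) has_real_derivative
      inverse (sqrt (1 + 4 * Q / (J * w^2))) / 2 * r') (at w)"
    by (rule DERIV_chain2[OF DERIV_real_sqrt])
  show ?thesis
    unfolding real_differentiable_def F_crit_def[abs_def]
    by (rule exI, rule DERIV_cdivide, rule DERIV_add, rule DERIV_const, rule sqrt')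
qed

lemma F_envelope_has_real_derivative:
  assumes "J > 0" "Q > 0" "w \<noteq> 0"
  shows "(F_envelope J Q has_real_derivative - J * w - 2 * J * w * F_crit J Q w) (at w)"
proof -
  let ?t = "F_crit J Q"
  obtain t' where t': "(?t has_real_derivative t') (at w)"
    using F_crit_differentiable[OF assms] real_differentiable_def by blast
  have t: "?t w > 0"
    using F_crit_pos[OF assms] .
  have "(F_envelope J Q has_real_derivative
      - J * w - 2 * J * w * ?t w - J * w^2 * t' + Q * (t' / ?t w - t' / (?t w + 1))) (at w)"
    unfolding F_envelope_def[abs_def]
    using t by (auto intro!: derivative_eq_intros t')
  moreover have "Q * (t' / ?t w - t' / (?t w + 1)) = Q / (?t w * (?t w + 1)) * t'"
    using t by (simp add: field_simps)
  moreover have "Q / (?t w * (?t w + 1)) = J * w^2"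
    using assms by (simp add: F_crit_equation)
  ultimately show ?thesis
    by simp
qed

lemma G_crit_pos:
  assumes "J \<ge> 0" "c > 0"
  shows "G_crit J c w > 0"
proof -
  have "- (sqrt J * w) \<le> sqrt (J * w^2)"
    using assms mult_left_mono[OF abs_ge_minus_self[of w], of "sqrt J"] by (simp add: real_sqrt_mult)
  also have "\<dots> < sqrt (J * w^2 + 2 * c)"
    using assms by simp
  finally show ?thesis
    unfolding G_crit_def by simp
qed

lemma G_crit_ge:
  assumes "J \<ge> 0" "c \<ge> 0"
  shows "sqrt J * w \<le> G_crit J c w"
proof -
  have "sqrt J * w \<le> sqrt (J * w^2)"
    using assms mult_left_mono[OF abs_ge_self[of w], of "sqrt J"] by (simp add: real_sqrt_mult)
  also have "\<dots> \<le> sqrt (J * w^2 + 2 * c)"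
    using assms by simp
  finally show ?thesis
    unfolding G_crit_def by (simp add: mult.commute)
qed

lemma G_crit_equation:
  assumes "J \<ge> 0" "c \<ge> 0"
  shows "2 * (G_crit J c w)^2 - 2 * sqrt J * w * G_crit J c w = c"
proof -
  define a where "a = sqrt J * w"
  define b where "b = sqrt (J * w^2 + 2 * c)"
  have u: "G_crit J c w = (a + b) / 2"
    unfolding G_crit_def a_def b_def ..
  have "2 * (G_crit J c w)^2 - 2 * a * G_crit J c w = (b^2 - a^2) / 2"
    unfolding u by (simp add: field_simps power2_eq_square)
  also have "b^2 = a^2 + 2 * c"
    unfolding a_def b_def using assms by (simp add: power_mult_distrib)
  finally show ?thesis
    by (simp add: a_def)
qed

lemma G_crit_differentiable:
  assumes "J \<ge> 0" "c > 0"
  shows "G_crit J c differentiable (at w)"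
proof -
  have "\<exists>r'. ((\<lambda>w. J * w^2 + 2 * c) has_real_derivative r') (at w)"
    by (intro exI) (auto intro!: derivative_eq_intros)
  then obtain r' where r': "((\<lambda>w. J * w^2 + 2 * c) has_real_derivative r') (at w)" ..
  have "0 < J * w^2 + 2 * c"
    using assms by (simp add: add_nonneg_pos)
  from this r' have sqrt': "((\<lambda>w. sqrt (J * w^2 + 2 * c)) has_real_derivative
      inverse (sqrt (J * w^2 + 2 * c)) / 2 * r') (at w)"
    by (rule DERIV_chain2[OF DERIV_real_sqrt])
  show ?thesis
    unfolding real_differentiable_def G_crit_def[abs_def]
    by (rule exI, rule DERIV_cdivide, rule DERIV_add, rule DERIV_cmult, rule DERIV_ident, rule sqrt')
qed

lemma G_envelope_has_real_derivative:
  assumes "J \<ge> 0" "c > 0"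
  shows "(G_envelope J c has_real_derivative - J * w + 2 * sqrt J * G_crit J c w) (at w)"
proof -
  let ?u = "G_crit J c"
  obtain u' where u': "(?u has_real_derivative u') (at w)"
    using G_crit_differentiable[OF assms] real_differentiable_def by blast
  have u: "?u w > 0"
    using G_crit_pos[OF assms] .
  have "(G_envelope J c has_real_derivative
      - J * w + 2 * sqrt J * ?u w + (c / ?u w - 2 * ?u w + 2 * sqrt J * w) * u') (at w)"
    unfolding G_envelope_def[abs_def]
    using u by (auto intro!: derivative_eq_intros u' simp: algebra_simps)
  moreover have "c / ?u w - 2 * ?u w + 2 * sqrt J * w = 0"
    using u G_crit_equation[of J c w] assms by (simp add: field_simps power2_eq_square)
  ultimately show ?thesis
    by simp
qed

lemma monotone_on_cong:
  assumes "monotone_on A orda ordb f" and "\<And>x. x \<in> A \<Longrightarrow> f x = g x"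
  shows "monotone_on A orda ordb g"
  using assms by (simp add: monotone_on_def)

lemma mono_on_if_has_real_derivative_nonneg:
  fixes f f' :: "real \<Rightarrow> real"
  assumes "\<And>x y. x \<in> A \<Longrightarrow> y \<in> A \<Longrightarrow> {x..y} \<subseteq> A"
    and "\<And>x. x \<in> A \<Longrightarrow> (f has_real_derivative f' x) (at x)"
    and "\<And>x. x \<in> A \<Longrightarrow> f' x \<ge> 0"
  shows "mono_on A f"
proof (rule monotone_onI)
  fix x y
  assume "x \<in> A" "y \<in> A" "x \<le> y"
  then show "f x \<le> f y"
    using deriv_nonneg_imp_mono[of x y f f'] assms by blast
qed

lemma antimono_on_if_has_real_derivative_nonpos:
  fixes f f' :: "real \<Rightarrow> real"
  assumes "\<And>x y. x \<in> A \<Longrightarrow> y \<in> A \<Longrightarrow> {x..y} \<subseteq> A"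
    and "\<And>x. x \<in> A \<Longrightarrow> (f has_real_derivative f' x) (at x)"
    and "\<And>x. x \<in> A \<Longrightarrow> f' x \<le> 0"
  shows "antimono_on A f"
proof (rule monotone_onI)
  fix x y
  assume "x \<in> A" "y \<in> A" "x \<le> y"
  then show "f y \<le> f x"
    using deriv_nonpos_imp_antimono[of x y f f'] assms by blast
qed

lemma antimono_on_F_envelope_plus_linear:
  assumes "J > 0" "Q > 0"
  shows "antimono_on {w. 0 < w \<and> \<eta> \<le> J * w} (\<lambda>w. F_envelope J Q w + \<eta> * w)"
proof (rule antimono_on_if_has_real_derivative_nonpos)
  fix w
  assume w: "w \<in> {w. 0 < w \<and> \<eta> \<le> J * w}"
  have "((\<lambda>w. F_envelope J Q w + \<eta> * w) has_real_derivative
      (- J * w - 2 * J * w * F_crit J Q w) + \<eta> * 1) (at w)"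
    using w assms by (intro DERIV_add DERIV_cmult DERIV_ident F_envelope_has_real_derivative) auto
  then show "((\<lambda>w. F_envelope J Q w + \<eta> * w) has_real_derivative
      - J * w - 2 * J * w * F_crit J Q w + \<eta>) (at w)"
    by simp
  have "0 < J * w * F_crit J Q w"
    using w assms F_crit_pos[of J Q w] by simp
  then show "- J * w - 2 * J * w * F_crit J Q w + \<eta> \<le> 0"
    using w by simp
next
  fix x y
  assume "x \<in> {w. 0 < w \<and> \<eta> \<le> J * w}"
  then show "{x..y} \<subseteq> {w. 0 < w \<and> \<eta> \<le> J * w}"
    using assms by (auto intro: order_trans[OF _ mult_left_mono[of x _ J]])
qed

lemma mono_on_G_envelope_minus_linear:
  assumes "J \<ge> 0" "c > 0"
  shows "mono_on {w. \<eta> \<le> J * w} (\<lambda>w. G_envelope J c w - \<eta> * w)"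
proof (rule mono_on_if_has_real_derivative_nonneg)
  fix w
  assume w: "w \<in> {w. \<eta> \<le> J * w}"
  have "((\<lambda>w. G_envelope J c w - \<eta> * w) has_real_derivative
      (- J * w + 2 * sqrt J * G_crit J c w) - \<eta> * 1) (at w)"
    using assms by (intro DERIV_diff DERIV_cmult DERIV_ident G_envelope_has_real_derivative)
  then show "((\<lambda>w. G_envelope J c w - \<eta> * w) has_real_derivative
      - J * w + 2 * sqrt J * G_crit J c w - \<eta>) (at w)"
    by simp
  have "J * w \<le> sqrt J * G_crit J c w"
    using mult_left_mono[OF G_crit_ge[of J c w], of "sqrt J"] assms by (simp add: mult.assoc[symmetric])
  then show "- J * w + 2 * sqrt J * G_crit J c w - \<eta> \<ge> 0"
    using w by simp
next
  fix x y
  assume "x \<in> {w. \<eta> \<le> J * w}"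
  then show "{x..y} \<subseteq> {w. \<eta> \<le> J * w}"
    using assms by (auto intro: order_trans[OF _ mult_left_mono[of x _ J]])
qed

lemma power_eq_powr_half_squared:
  fixes z :: real
  assumes "z > 0"
  shows "z^n = (z powr (real n / 2))^2"
  using assms by (simp add: powr_power powr_realpow)

lemma Fhat_eq_F_envelope:
  assumes "j > 0" "QQ n \<beta> > 0" "z > 0"
  shows "Fhat n j \<beta> z = F_envelope (real j) (QQ n \<beta>) (z powr (real n / 2))"
proof -
  let ?w = "z powr (real n / 2)"
  have y: "yy n j z = - real j * ?w^2"
    unfolding yy_def power_eq_powr_half_squared[OF \<open>z > 0\<close>] ..
  have t0: "t0 n j \<beta> z = F_crit (real j) (QQ n \<beta>) ?w"
    unfolding t0_def F_crit_def y by simp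
  have "F_crit (real j) (QQ n \<beta>) ?w > 0"
    using assms by (intro F_crit_pos) auto
  then show ?thesis
    unfolding Fhat_def FF_def F_envelope_def t0 y power_eq_powr_half_squared[OF \<open>z > 0\<close>]
    by (simp add: ln_div)
qed

lemma Ghat_eq_G_envelope:
  assumes "j > 0" "z > 0"
  shows "Ghat n j \<beta> z = G_envelope (real j) (2 * QQ n \<beta> + gamma_n n) (z powr (real n / 2))"
proof -
  let ?w = "z powr (real n / 2)" and ?c = "2 * QQ n \<beta> + gamma_n n"
  have y: "- yy n j z = real j * ?w^2"
    unfolding yy_def power_eq_powr_half_squared[OF \<open>z > 0\<close>] by simp
  have Jw: "real j * ?w^2 \<noteq> 0"
    using assms by simp
  have sqrt_y: "sqrt (- yy n j z) = sqrt (real j) * ?w"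
    unfolding y by (simp add: real_sqrt_mult)
  have "sqrt (- yy n j z) * sqrt (1 + (4 * QQ n \<beta> + 2 * gamma_n n) / (- yy n j z))
      = sqrt (real j * ?w^2 + 2 * ?c)"
    unfolding y real_sqrt_mult[symmetric] using Jw by (simp add: field_simps)
  then have "u0 n j \<beta> z = G_crit (real j) ?c ?w"
    unfolding u0_def G_crit_def sqrt_y by (simp add: field_simps)
  then show ?thesis
    unfolding Ghat_def GG_def G_envelope_def sqrt_y power_eq_powr_half_squared[OF \<open>z > 0\<close>]
    by simp
qed

lemma powr_half_image_subset:
  fixes \<eta> J :: real
  assumes "n > 0" "J \<ge> 1" "\<eta> \<ge> 0"
  shows "(\<lambda>z. z powr (real n / 2)) ` {z. z > 0 \<and> z \<ge> \<eta> powr (2 / real n)}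
           \<subseteq> {w. 0 < w \<and> \<eta> \<le> J * w}"
proof (intro image_subsetI CollectI conjI)
  fix z
  assume "z \<in> {z. z > 0 \<and> z \<ge> \<eta> powr (2 / real n)}"
  then have z: "0 < z" "\<eta> powr (2 / real n) \<le> z"
    by auto
  then show "0 < z powr (real n / 2)"
    by simp
  have "\<eta> = (\<eta> powr (2 / real n)) powr (real n / 2)"
    using assms by (simp add: powr_powr)
  also have "\<dots> \<le> z powr (real n / 2)"
    using z assms by (intro powr_mono2) auto
  also have "\<dots> \<le> J * z powr (real n / 2)"
    using assms mult_right_mono[of 1 J "z powr (real n / 2)"] by simp
  finally show "\<eta> \<le> J * z powr (real n / 2)" .
qed

theorem lemma4p7:
  fixes n j :: nat and \<beta> \<eta> :: real
  assumes "n \<ge> 2" and "j \<ge> 1"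
    and "\<beta> \<le> 0" and "QQ n \<beta> \<ge> 1"
    and "\<eta> \<ge> 0"
  shows "antimono_on {z. z > 0 \<and> z \<ge> \<eta> powr (2 / real n)}
           (\<lambda>z. Fhat n j \<beta> z + \<eta> * z powr (real n / 2))
       \<and> mono_on {z. z > 0 \<and> z \<ge> \<eta> powr (2 / real n)}
           (\<lambda>z. Ghat n j \<beta> z - \<eta> * z powr (real n / 2))"
proof -
  define S where "S = {z. z > 0 \<and> z \<ge> \<eta> powr (2 / real n)}"
  let ?w = "\<lambda>z::real. z powr (real n / 2)"
  have w_mono: "mono_on S ?w"
    unfolding S_def by (rule monotone_onI) (simp add: powr_mono2)
  have w_range: "?w ` S \<subseteq> {w. 0 < w \<and> \<eta> \<le> real j * w}"
    unfolding S_def using assms by (intro powr_half_image_subset) auto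
  have j: "j > 0" and Q: "QQ n \<beta> > 0" and gamma_pos: "gamma_n n > 0"
    using assms by (auto simp: gamma_n_def add_pos_nonneg)
  have "antimono_on S ((\<lambda>w. F_envelope (real j) (QQ n \<beta>) w + \<eta> * w) \<circ> ?w)"
    using j Q by (intro monotone_on_o[OF antimono_on_F_envelope_plus_linear w_mono w_range]) auto
  then have "antimono_on S (\<lambda>z. Fhat n j \<beta> z + \<eta> * ?w z)"
    by (rule monotone_on_cong) (simp add: S_def j Q Fhat_eq_F_envelope)
  moreover have "mono_on S ((\<lambda>w. G_envelope (real j) (2 * QQ n \<beta> + gamma_n n) w - \<eta> * w) \<circ> ?w)"
    using Q gamma_pos w_range
    by (intro monotone_on_o[OF mono_on_G_envelope_minus_linear w_mono]) auto
  then have "mono_on S (\<lambda>z. Ghat n j \<beta> z - \<eta> * ?w z)"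
    by (rule monotone_on_cong) (simp add: S_def j Ghat_eq_G_envelope)
  ultimately show ?thesis
    unfolding S_def ..
qed

end
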